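(* Let $f(z)=e^z$, let $K\subset\mathbb{C}\setminus\{0\}$ be compact, and let $U\subset\mathbb{C}$ be open and nonempty. Then there is $N\in\mathbb{N}$ such that $K\subset f^n(U)$ for all $n\geq N$.
   Context: $f^n$ denotes the $n$-th iterate of $f$. *)

theory Defs
  imports "HOL-Analysis.Analysis"
begin

end

theory Submission
  imports Defs "HOL-Complex_Analysis.Complex_Analysis"
begin

(* Let V_n = exp^n(U).  The argument has three stages.
   (1) Expansion.  Along every orbit z_n = exp^n(z) the derivative
       |(exp^n)'(z)| = prod_{j<n} exp(Re z_j) is unbounded: if it were bounded, the
       contraction |sin t| < |t| would force |Im z_n| < 1/2 eventually, after which
       Re z_n grows by 1/4 per step and the product grows geometrically.
       Bloch's theorem then puts a disc of radius > pi/2 into some V_n, so some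
       V_{n+1} meets the real axis; V_{n+1} is open, so it contains a small square
       centred on the real axis.
   (2) Growth of squares.  exp maps the square of half-side h <= 1 around a real c onto
       a set containing the square of half-side exp(c) h/4 around exp(c); along the real
       orbit of c the half-sides grow until they exceed 8 > pi, and the exponential of
       such a square is a wide annulus.  Two more steps give exp(-7) < |w| < exp 7.
   (3) Growth of annuli.  exp maps the annulus exp(-X) < |w| < exp X onto a set
       containing the next one with X + 1, and every compact K avoiding 0 lies in
       one of these annuli; this gives all large n at once. *)

lemma sin_le_quartic:
  fixes t :: real
  shows "sin t \<le> t - t^3/6 + t^4/24"
proof -
  have taylor: "(\<Sum>m<4. sin_coeff m * t ^ m) = t - t^3/6"
    by (simp add: lessThan_nat_numeral sin_coeff_def fact_numeral)
  have remainder: "inverse (fact 4) * \<bar>t\<bar> ^ 4 = t^4 / (24::real)"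
    by (simp add: fact_numeral)
  have "\<bar>sin t - (t - t^3/6)\<bar> \<le> t^4/24"
    using Maclaurin_sin_bound[of t 4] unfolding taylor remainder .
  then show ?thesis by linarith
qed

(* Away from the origin the sine is a strict contraction; this drives the imaginary
   parts of a bounded-derivative orbit towards zero. *)
lemma abs_sin_contract:
  fixes t :: real
  assumes "1/2 \<le> \<bar>t\<bar>"
  shows "\<bar>sin t\<bar> \<le> 47/48 * \<bar>t\<bar>"
proof -
  define s where "s = \<bar>t\<bar>"
  have abs_sin: "\<bar>sin t\<bar> = \<bar>sin s\<bar>" by (simp add: s_def abs_if)
  have s: "1/2 \<le> s" using assms by (simp add: s_def)
  show ?thesis
  proof (cases "s \<le> 2")
    case True
    have "0 \<le> sin s" using s True pi_gt3 by (intro sin_ge_zero) auto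
    have "s^3 * (4 - s) \<ge> s^3 * 2" using True s by (intro mult_left_mono) auto
    moreover have "s^3 \<ge> s / 4"
    proof -
      have "s^2 \<ge> (1/2)^2" using s by (intro power_mono) auto
      then have "s * s^2 \<ge> s * (1/4)" using s by (intro mult_left_mono) (auto simp: power2_eq_square)
      then show ?thesis by (simp add: power3_eq_cube power2_eq_square mult_ac)
    qed
    moreover have "s - s^3/6 + s^4/24 = s - s^3 * (4 - s) / 24"
      by (simp add: power_numeral_reduce field_simps)
    ultimately have "s - s^3/6 + s^4/24 \<le> 47/48 * s" by linarith
    then show ?thesis using sin_le_quartic[of s] \<open>0 \<le> sin s\<close> abs_sin
      by (simp add: s_def)
  next
    case False
    then show ?thesis using abs_sin_le_one[of t] s_def by linarith
  qed
qed

lemma exp_half_ge: "t + 1/4 \<le> exp (t::real) / 2"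
proof (cases "t \<le> 1/2")
  case True
  then show ?thesis using exp_ge_add_one_self[of t] by linarith
next
  case False
  then have "1 + t + t^2/2 \<le> exp t" by (intro exp_lower_Taylor_quadratic) auto
  moreover have "0 \<le> (t - 1)^2" by simp
  moreover have "(t - 1)^2 = t^2 - 2*t + 1" by (simp add: power2_diff)
  ultimately show ?thesis by linarith
qed

lemma exp_neg_le_one_minus_quarter:
  fixes h :: real
  assumes "0 \<le> h" "h \<le> 1"
  shows "exp (-h) \<le> 1 - h/4"
proof -
  have "1 \<le> (1 - h/4) * (1 + h)"
  proof -
    have "0 \<le> h * (3 - h)" using assms by simp
    moreover have "(1 - h/4) * (1 + h) = 1 + h * (3 - h) / 4" by (simp add: field_simps)
    ultimately show ?thesis by simp
  qed
  then have "1 / (1 + h) \<le> 1 - h/4" using assms by (simp add: divide_le_eq)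
  moreover have "exp (-h) \<le> 1 / (1 + h)"
    using exp_ge_add_one_self[of h] assms by (simp add: exp_minus field_simps)
  ultimately show ?thesis by linarith
qed

lemma ln_between:
  fixes x :: real
  assumes "exp a < x" "x < exp b"
  shows "a < ln x" "ln x < b"
  using assms by (metis exp_gt_zero ln_exp ln_less_cancel_iff order.strict_trans)+

lemma prod_unbounded_if_eventually_ge_2:
  fixes f :: "nat \<Rightarrow> real"
  assumes pos: "\<And>n. 0 < f n" and large: "\<forall>\<^sub>F n in sequentially. 2 \<le> f n"
  shows "\<not> (\<exists>M. \<forall>n. (\<Prod>j<n. f j) \<le> M)"
proof
  assume "\<exists>M. \<forall>n. (\<Prod>j<n. f j) \<le> M"
  then obtain M where M: "\<And>n. (\<Prod>j<n. f j) \<le> M" by blast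
  obtain n0 where n0: "\<And>n. n0 \<le> n \<Longrightarrow> 2 \<le> f n"
    using large by (auto simp: eventually_sequentially)
  define P0 where "P0 = (\<Prod>j<n0. f j)"
  have "0 < P0" by (simp add: P0_def pos prod_pos)
  have geometric: "2^k * P0 \<le> (\<Prod>j<n0 + k. f j)" for k
  proof (induction k)
    case (Suc k)
    have "2^Suc k * P0 = 2 * (2^k * P0)" by simp
    also have "\<dots> \<le> f (n0 + k) * (\<Prod>j<n0 + k. f j)"
      using Suc.IH n0[of "n0 + k"] \<open>0 < P0\<close> by (intro mult_mono) auto
    also have "\<dots> = (\<Prod>j<n0 + Suc k. f j)" by (simp add: mult.commute)
    finally show ?case .
  qed (simp add: P0_def)
  obtain k where "M / P0 < 2^k" using real_arch_pow[of 2 "M / P0"] by auto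
  then have "M < 2^k * P0" using \<open>0 < P0\<close> by (simp add: divide_less_eq)
  then show False using geometric[of k] M[of "n0 + k"] by linarith
qed

lemma iterate_image_Suc: "(exp ^^ Suc n) ` U = exp ` (exp ^^ n) ` (U::complex set)"
  by (simp add: image_comp)

lemma iterate_has_derivative:
  "((exp ^^ n) has_field_derivative (\<Prod>j<n. exp ((exp ^^ j) z))) (at (z::complex))"
proof (induction n)
  case (Suc n)
  have "((\<lambda>x. exp ((exp ^^ n) x)) has_field_derivative
          exp ((exp ^^ n) z) * (\<Prod>j<n. exp ((exp ^^ j) z))) (at z)"
    by (rule DERIV_chain2[OF DERIV_exp Suc.IH])
  then show ?case by (simp add: mult.commute)
qed simp

lemma iterate_holomorphic: "(exp ^^ n) holomorphic_on (S::complex set)"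
  unfolding holomorphic_on_def field_differentiable_def
  using iterate_has_derivative has_field_derivative_at_within by blast

lemma iterate_image_open:
  assumes "open (U::complex set)"
  shows "open ((exp ^^ n) ` U)"
proof (induction n)
  case (Suc n)
  have "\<not> exp constant_on (UNIV::complex set)"
  proof
    assume "exp constant_on (UNIV::complex set)"
    then obtain c where "\<And>w::complex. exp w = c" by (auto simp: constant_on_def)
    then have "exp (0::complex) = exp (\<i> * pi)" by metis
    then show False by (simp add: exp_Euler)
  qed
  then have "open (exp ` (exp ^^ n) ` U)"
    using Suc by (intro open_mapping_thm[of exp UNIV]) (auto intro: holomorphic_intros)
  then show ?case by (simp only: iterate_image_Suc)
qed (use assms in simp)

(* If the derivative along the orbit of z stays bounded by M,
   the quantity |Im z_n| / |(exp^n)'(z)| is nonincreasing and drops by at least 1/(96 M)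
   whenever |Im z_n| >= 1/2; as it converges, this happens only finitely often. *)
lemma orbit_imag_eventually_small:
  fixes z :: complex
  assumes bound: "\<And>n. (\<Prod>j<n. exp (Re ((exp ^^ j) z))) \<le> M"
  shows "\<forall>\<^sub>F n in sequentially. \<bar>Im ((exp ^^ n) z)\<bar> < 1/2"
proof -
  define y where "y n = Im ((exp ^^ n) z)" for n
  define Q where "Q n = (\<Prod>j<n. exp (Re ((exp ^^ j) z)))" for n
  define a where "a n = \<bar>y n\<bar> / Q n" for n
  have Q_pos: "0 < Q n" for n by (simp add: Q_def prod_pos)
  have M_pos: "0 < M" using bound[of 0] by simp
  have y_Suc: "y (Suc n) = exp (Re ((exp ^^ n) z)) * sin (y n)" for n
    by (simp add: y_def Im_exp)
  have Q_Suc: "Q (Suc n) = exp (Re ((exp ^^ n) z)) * Q n" for n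
    by (simp add: Q_def mult.commute)
  have a_drop: "a n - a (Suc n) = (\<bar>y n\<bar> - \<bar>sin (y n)\<bar>) / Q n" for n
    by (simp add: a_def y_Suc Q_Suc abs_mult diff_divide_distrib)
  have "decseq a"
    using a_drop abs_sin_x_le_abs_x Q_pos
    by (intro decseq_SucI) (metis diff_ge_0_iff_ge divide_nonneg_pos)
  moreover have "\<forall>n. 0 \<le> a n" by (simp add: a_def Q_pos less_imp_le)
  ultimately obtain L where "a \<longlonglongrightarrow> L" using decseq_convergent by blast
  then have "(\<lambda>n. a n - a (Suc n)) \<longlonglongrightarrow> L - L" by (intro tendsto_diff LIMSEQ_Suc)
  then have "\<forall>\<^sub>F n in sequentially. a n - a (Suc n) < 1 / (96 * M)"
    using M_pos by (intro order_tendstoD(2)) auto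
  then show ?thesis
  proof (rule eventually_mono)
    fix n assume small: "a n - a (Suc n) < 1 / (96 * M)"
    show "\<bar>Im ((exp ^^ n) z)\<bar> < 1/2"
    proof (rule ccontr)
      assume "\<not> ?thesis"
      then have big: "1/2 \<le> \<bar>y n\<bar>" by (simp add: y_def)
      then have "\<bar>y n\<bar> / 48 \<le> \<bar>y n\<bar> - \<bar>sin (y n)\<bar>" using abs_sin_contract by force
      moreover have "1 / (96 * M) \<le> (\<bar>y n\<bar> / 48) / M" using big M_pos by (simp add: field_simps)
      moreover have "(\<bar>y n\<bar> / 48) / M \<le> (\<bar>y n\<bar> - \<bar>sin (y n)\<bar>) / Q n"
        using calculation(1) big Q_pos[of n] bound[of n]
        by (intro frac_le) (auto simp: Q_def)
      ultimately show False using small a_drop[of n] by linarith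
    qed
  qed
qed

(* Near the real axis, Re z_{n+1} = exp(Re z_n) cos(Im z_n) >= Re z_n + 1/4. *)
lemma orbit_real_eventually_large:
  fixes z :: complex
  assumes "\<forall>\<^sub>F n in sequentially. \<bar>Im ((exp ^^ n) z)\<bar> < 1/2"
  shows "\<forall>\<^sub>F n in sequentially. 2 \<le> exp (Re ((exp ^^ n) z))"
proof -
  define x where "x n = Re ((exp ^^ n) z)" for n
  obtain n0 where n0: "\<And>n. n0 \<le> n \<Longrightarrow> \<bar>Im ((exp ^^ n) z)\<bar> < 1/2"
    using assms by (auto simp: eventually_sequentially)
  have step: "x n + 1/4 \<le> x (Suc n)" if "n0 \<le> n" for n
  proof -
    have "cos (pi/3) \<le> cos \<bar>Im ((exp ^^ n) z)\<bar>"
      using n0[OF that] pi_gt3 by (intro cos_monotone_0_pi_le) auto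
    then have "1/2 \<le> cos (Im ((exp ^^ n) z))" by (simp add: cos_60)
    then have "exp (x n) / 2 \<le> x (Suc n)"
      by (simp add: x_def Re_exp mult_left_mono[of "1/2" _ "exp (x n)", simplified])
    then show ?thesis using exp_half_ge[of "x n"] by linarith
  qed
  have linear: "x n0 + real k / 4 \<le> x (n0 + k)" for k
  proof (induction k)
    case (Suc k)
    then show ?case using step[of "n0 + k"] by (simp add: add_divide_distrib)
  qed simp
  show ?thesis
  proof (rule eventually_sequentiallyI)
    fix n assume n: "n0 + nat \<lceil>4 * (1 - x n0)\<rceil> \<le> n"
    then have "4 * (1 - x n0) \<le> real (n - n0)" by linarith
    moreover have "n0 + (n - n0) = n" using n by simp
    ultimately have "1 \<le> x n" using linear[of "n - n0"] by (simp add: field_simps)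
    then have "exp 1 \<le> exp (x n)" by simp
    moreover have "2 \<le> exp (1::real)" using exp_ge_add_one_self[of 1] by simp
    ultimately show "2 \<le> exp (Re ((exp ^^ n) z))" unfolding x_def by linarith
  qed
qed

lemma orbit_derivative_unbounded:
  fixes z :: complex
  shows "\<not> (\<exists>M. \<forall>n. (\<Prod>j<n. exp (Re ((exp ^^ j) z))) \<le> M)"
proof
  assume "\<exists>M. \<forall>n. (\<Prod>j<n. exp (Re ((exp ^^ j) z))) \<le> M"
  then obtain M where "\<And>n. (\<Prod>j<n. exp (Re ((exp ^^ j) z))) \<le> M" by blast
  then have "\<forall>\<^sub>F n in sequentially. 2 \<le> exp (Re ((exp ^^ n) z))"
    by (intro orbit_real_eventually_large orbit_imag_eventually_small)
  then have "\<not> (\<exists>M. \<forall>n. (\<Prod>j<n. exp (Re ((exp ^^ j) z))) \<le> M)"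
    by (intro prod_unbounded_if_eventually_ge_2) simp
  then show False using \<open>\<exists>M. _\<close> by blast
qed

(* Bloch's theorem applied to exp^n on a disc with large derivative at the centre gives
   a disc of radius > pi/2 in the image, hence a point mapped by exp to the real axis. *)
lemma iterate_hits_real_axis:
  fixes a :: complex
  assumes "0 < \<delta>"
  shows "\<exists>n. \<exists>z\<in>ball a \<delta>. Im ((exp ^^ n) z) = 0"
proof -
  obtain n where n: "6 * pi / \<delta> < (\<Prod>j<n. exp (Re ((exp ^^ j) a)))"
    using orbit_derivative_unbounded[of a] by (meson not_le)
  define r where "r = \<delta> * norm (deriv (exp ^^ n) a) / 12"
  have "norm (deriv (exp ^^ n) a) = (\<Prod>j<n. exp (Re ((exp ^^ j) a)))"
    by (simp add: DERIV_imp_deriv[OF iterate_has_derivative] prod_norm[symmetric] norm_exp_eq_Re)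
  then have "\<delta> * (6 * pi / \<delta>) < \<delta> * norm (deriv (exp ^^ n) a)"
    using n assms by (intro mult_strict_left_mono) auto
  then have "pi / 2 < r" using assms by (simp add: r_def)
  obtain b where b: "ball b r \<subseteq> (exp ^^ n) ` ball a \<delta>"
    using Bloch[of "exp ^^ n" a \<delta> r] iterate_holomorphic assms unfolding r_def by blast
  (* A disc of radius greater than pi/2 meets a line Im w = k * pi, which exp maps into the reals. *)
  define k where "k = \<lfloor>Im b / pi + 1/2\<rfloor>"
  define q where "q = Complex (Re b) (of_int k * pi)"
  have "of_int k \<le> Im b / pi + 1/2" "Im b / pi + 1/2 < of_int k + 1"
    unfolding k_def by linarith+
  then have "of_int k * pi \<le> Im b + pi/2" "Im b - pi/2 < of_int k * pi"
    using pi_gt_zero by (simp_all add: field_simps)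
  then have "dist b q < r"
    using \<open>pi / 2 < r\<close> by (simp add: q_def dist_norm cmod_def)
  then obtain z where z: "z \<in> ball a \<delta>" "(exp ^^ n) z = q" using b by force
  have "Im ((exp ^^ Suc n) z) = exp (Re q) * sin (of_int k * pi)"
    by (simp add: z(2) Im_exp q_def)
  also have "\<dots> = 0" by (simp add: sin_zero_iff_int2)
  finally show ?thesis using z(1) by blast
qed

definition real_square :: "real \<Rightarrow> real \<Rightarrow> complex set" where
  "real_square c h = {z. \<bar>Re z - c\<bar> < h \<and> \<bar>Im z\<bar> < h}"

definition annulus :: "real \<Rightarrow> real \<Rightarrow> complex set" where
  "annulus r R = {z. r < norm z \<and> norm z < R}"

lemma real_square_mono: "h \<le> h' \<Longrightarrow> real_square c h \<subseteq> real_square c h'"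
  by (auto simp: real_square_def)

lemma annulus_mono:
  "X \<le> Y \<Longrightarrow> annulus (exp (-X)) (exp X) \<subseteq> annulus (exp (-Y)) (exp Y)"
  unfolding annulus_def
  by auto (meson exp_le_cancel_iff le_less_trans neg_le_iff_le, meson exp_le_cancel_iff less_le_trans)

lemma real_square_subset_ball:
  assumes "Im p = 0"
  shows "real_square (Re p) (e/2) \<subseteq> ball p e"
proof
  fix q assume "q \<in> real_square (Re p) (e/2)"
  then have "\<bar>Re (p - q)\<bar> < e/2" "\<bar>Im (p - q)\<bar> < e/2"
    using assms by (auto simp: real_square_def abs_minus_commute)
  moreover have "dist p q \<le> \<bar>Re (p - q)\<bar> + \<bar>Im (p - q)\<bar>"
    unfolding dist_norm by (rule cmod_le)
  ultimately show "q \<in> ball p e" by simp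
qed

(* Choosing the branch of the logarithm with imaginary part in [r+1, r+1+2pi) shows that
   exp maps a sufficiently wide annulus onto a set containing a given annulus. *)
lemma exp_covers_annulus:
  assumes r: "0 < r" and X: "0 \<le> X" and gap: "r + X + 10 \<le> R"
  shows "annulus (exp (-X)) (exp X) \<subseteq> exp ` annulus r R"
proof
  fix w assume "w \<in> annulus (exp (-X)) (exp X)"
  then have w: "exp (-X) < norm w" "norm w < exp X" by (auto simp: annulus_def)
  then have "w \<noteq> 0" by auto
  have Re_Ln: "\<bar>Re (Ln w)\<bar> < X"
    using ln_between[OF w] \<open>w \<noteq> 0\<close> by (simp add: abs_less_iff)
  define \<theta> where "\<theta> = Im (Ln w)"
  have "-pi < \<theta>" "\<theta> \<le> pi"
    using \<open>w \<noteq> 0\<close> by (auto simp: \<theta>_def mpi_less_Im_Ln Im_Ln_le_pi)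
  define k where "k = \<lceil>(r + 1 - \<theta>) / (2*pi)\<rceil>"
  have "(r + 1 - \<theta>) / (2*pi) \<le> of_int k" "of_int k < (r + 1 - \<theta>) / (2*pi) + 1"
    unfolding k_def by linarith+
  then have Im_bounds: "r + 1 \<le> \<theta> + 2*pi * of_int k" "\<theta> + 2*pi * of_int k < r + 1 + 2*pi"
    using pi_gt_zero by (simp_all add: field_simps)
  define z where "z = Ln w + \<i> * (of_int k * (of_real pi * 2))"
  have "exp z = w" using \<open>w \<noteq> 0\<close> by (simp add: z_def)
  have Im_z: "Im z = \<theta> + 2*pi * of_int k" and Re_z: "Re z = Re (Ln w)"
    by (simp_all add: z_def \<theta>_def)
  have "r < norm z" using abs_Im_le_cmod[of z] Im_z Im_bounds by linarith
  moreover have "norm z < R"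
    using cmod_le[of z] Re_z Re_Ln Im_z Im_bounds r pi_less_4 gap by linarith
  ultimately show "w \<in> exp ` annulus r R" using \<open>exp z = w\<close> by (auto simp: annulus_def)
qed

lemma exp_covers_via_Ln:
  assumes "exp (c - h) < norm w" "norm w < exp (c + h)" "\<bar>Im (Ln w)\<bar> < h"
  shows "w \<in> exp ` real_square c h"
proof -
  have "w \<noteq> 0" using assms(1) by auto
  then have "\<bar>Re (Ln w) - c\<bar> < h"
    using ln_between[OF assms(1,2)] by (simp add: abs_less_iff)
  then have "Ln w \<in> real_square c h" using assms(3) by (simp add: real_square_def)
  then show ?thesis using \<open>w \<noteq> 0\<close> by (metis exp_Ln image_eqI)
qed

lemma exp_square_covers_annulus:
  assumes "pi < h"
  shows "annulus (exp (c - h)) (exp (c + h)) \<subseteq> exp ` real_square c h"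
proof
  fix w assume w: "w \<in> annulus (exp (c - h)) (exp (c + h))"
  then have "w \<noteq> 0" by (auto simp: annulus_def)
  then have "\<bar>Im (Ln w)\<bar> < h" using assms mpi_less_Im_Ln[of w] Im_Ln_le_pi[of w] by linarith
  then show "w \<in> exp ` real_square c h" using w by (intro exp_covers_via_Ln) (auto simp: annulus_def)
qed

lemma abs_Im_Ln_le:
  assumes "0 < Re w"
  shows "\<bar>Im (Ln w)\<bar> \<le> \<bar>Im w\<bar> / Re w"
proof -
  have "w \<noteq> 0" using assms by auto
  then have "Im (Ln w) = arctan (Im w / Re w)"
    using assms by (metis Arg_eq_Im_Ln arg_conv_arctan)
  then show ?thesis using abs_arctan_le[of "Im w / Re w"] assms by simp
qed

lemma exp_square_covers_square:
  assumes h: "0 < h" "h \<le> 1"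
  shows "real_square (exp c) (exp c * h / 4) \<subseteq> exp ` real_square c h"
proof
  fix w assume "w \<in> real_square (exp c) (exp c * h / 4)"
  then have Re_w: "\<bar>Re w - exp c\<bar> < exp c * h / 4" and Im_w: "\<bar>Im w\<bar> < exp c * h / 4"
    by (auto simp: real_square_def)
  have "exp c * (1 - h/4) = exp c - exp c * h / 4" by (simp add: algebra_simps)
  then have Re_lower: "exp c * (1 - h/4) < Re w" using Re_w by linarith
  have "exp c * (3/4) \<le> exp c * (1 - h/4)" using h by (intro mult_left_mono) auto
  then have Re_pos: "exp c * (3/4) < Re w" using Re_lower by linarith
  then have "0 < Re w" using exp_gt_zero[of c] by linarith
  have "exp (c - h) = exp c * exp (-h)" by (simp add: exp_add[symmetric])
  also have "\<dots> \<le> exp c * (1 - h/4)"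
    using exp_neg_le_one_minus_quarter[of h] h by (intro mult_left_mono) auto
  finally have "exp (c - h) \<le> exp c * (1 - h/4)" .
  moreover have "Re w \<le> norm w" using complex_Re_le_cmod .
  ultimately have "exp (c - h) < norm w" using Re_lower by linarith
  moreover have "norm w < exp (c + h)"
  proof -
    have "norm w \<le> \<bar>Re w\<bar> + \<bar>Im w\<bar>" by (rule cmod_le)
    also have "\<dots> < exp c * (1 + h/2)"
    proof -
      have "\<bar>Re w\<bar> < exp c + exp c * h / 4" using Re_w \<open>0 < Re w\<close> by linarith
      moreover have "exp c * (1 + h/2) = exp c + exp c * h / 4 + exp c * h / 4"
        by (simp add: algebra_simps)
      ultimately show ?thesis using Im_w by linarith
    qed
    also have "\<dots> \<le> exp c * (1 + h)" using h by (intro mult_left_mono) auto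
    also have "\<dots> \<le> exp c * exp h"
      using exp_ge_add_one_self[of h] by (intro mult_left_mono) auto
    finally show ?thesis by (simp add: exp_add)
  qed
  moreover have "\<bar>Im (Ln w)\<bar> < h"
  proof -
    have "h * (exp c * (3/4)) < h * Re w" using Re_pos h by (intro mult_strict_left_mono)
    moreover have "exp c * h / 4 \<le> h * (exp c * (3/4))" using h by simp
    ultimately have "\<bar>Im w\<bar> < h * Re w" using Im_w by linarith
    then have "\<bar>Im w\<bar> / Re w < h" using \<open>0 < Re w\<close> by (simp add: divide_less_eq)
    then show ?thesis using abs_Im_Ln_le[of w] \<open>0 < Re w\<close> by linarith
  qed
  ultimately show "w \<in> exp ` real_square c h" by (rule exp_covers_via_Ln)
qed

(* Growth of squares.  The half-sides of the squares contained in successive V_n,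
   following the real orbit of the centre c0. *)
fun square_size :: "real \<Rightarrow> real \<Rightarrow> nat \<Rightarrow> real" where
  "square_size c0 h0 0 = h0"
| "square_size c0 h0 (Suc j) = exp ((exp ^^ j) c0) * min (square_size c0 h0 j) 1 / 4"

lemma square_size_pos: "0 < h0 \<Longrightarrow> 0 < square_size c0 h0 j"
  by (induction j) auto

lemma iterate_covers_squares:
  assumes V: "real_square c0 h0 \<subseteq> (exp ^^ m) ` U" and h0: "0 < h0"
  shows "real_square ((exp ^^ j) c0) (square_size c0 h0 j) \<subseteq> (exp ^^ (m + j)) ` (U::complex set)"
proof (induction j)
  case (Suc j)
  let ?c = "(exp ^^ j) c0" and ?h = "square_size c0 h0 j"
  have "real_square ((exp ^^ Suc j) c0) (square_size c0 h0 (Suc j))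
      = real_square (exp ?c) (exp ?c * min ?h 1 / 4)" by simp
  also have "\<dots> \<subseteq> exp ` real_square ?c (min ?h 1)"
    using square_size_pos[OF h0] by (intro exp_square_covers_square) auto
  also have "\<dots> \<subseteq> exp ` real_square ?c ?h" by (intro image_mono real_square_mono) simp
  also have "\<dots> \<subseteq> exp ` (exp ^^ (m + j)) ` U" using Suc by (rule image_mono)
  also have "\<dots> = (exp ^^ (m + Suc j)) ` U" by (simp only: iterate_image_Suc add_Suc_right)
  finally show ?case .
qed (use V in simp)

lemma square_size_eventually_large:
  assumes h0: "0 < h0"
  shows "\<exists>j. 8 \<le> square_size c0 h0 j \<and> 0 \<le> (exp ^^ j) c0"
proof -
  define c where "c j = ((exp::real \<Rightarrow> real) ^^ j) c0" for j
  define h where "h = square_size c0 h0"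
  have c_Suc: "c (Suc j) = exp (c j)" for j by (simp add: c_def)
  have c_ge: "real j \<le> c (Suc j)" for j
  proof (induction j)
    case (Suc j)
    have "1 + c (Suc j) \<le> c (Suc (Suc j))" unfolding c_Suc[of "Suc j"] by (rule exp_ge_add_one_self)
    with Suc show ?case by simp
  qed (simp add: c_Suc less_imp_le)
  (* Once the real centre exceeds 32, each step multiplies the size by at least 8, until it reaches 1. *)
  have h_step: "8 * min (h j) 1 \<le> h (Suc j)" if "33 \<le> j" for j
  proof -
    have "32 \<le> c j" using c_ge[of "j - 1"] that by simp
    then have "32 \<le> exp (c j)" using exp_ge_add_one_self[of "c j"] by linarith
    moreover have "0 \<le> min (h j) 1" using square_size_pos[OF h0, of c0 j] by (simp add: h_def)
    ultimately have "32 * min (h j) 1 \<le> exp (c j) * min (h j) 1" by (rule mult_right_mono)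
    then show ?thesis by (simp add: h_def c_def)
  qed
  have h_grow: "min (8^k * h 33) 8 \<le> h (33 + k)" for k
  proof (induction k)
    case (Suc k)
    then have "min (8^k * h 33) 1 \<le> min (h (33 + k)) 1" by linarith
    then show ?case using h_step[of "33 + k"] by simp
  qed simp
  obtain k where "8 / h 33 < 8^k" using real_arch_pow[of 8 "8 / h 33"] by auto
  then have "8 < 8^k * h 33" using square_size_pos[OF h0] by (simp add: h_def divide_less_eq)
  then have "8 \<le> h (33 + k)" using h_grow[of k] by linarith
  moreover have "0 \<le> c (33 + k)" using c_ge[of "32 + k"] by simp
  ultimately show ?thesis by (auto simp: h_def c_def)
qed

lemma large_square_covers_annulus:
  assumes "0 \<le> C" "8 \<le> H"
  shows "annulus (exp (-7)) (exp 7) \<subseteq> exp ` exp ` real_square C H"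
proof -
  have "annulus (exp (-7)) (exp 7) \<subseteq> exp ` annulus (exp (C - H)) (exp (C + H))"
  proof (rule exp_covers_annulus)
    have "exp (C - H) * exp (2*H) = exp (C + H)" by (simp add: exp_add[symmetric])
    moreover have "2 \<le> exp (2*H)" using exp_ge_add_one_self[of "2*H"] assms by linarith
    ultimately have "exp (C - H) * 2 \<le> exp (C + H)"
      by (metis exp_gt_zero mult_left_mono less_imp_le)
    moreover have "41 \<le> exp (C + H)"
    proof -
      have "1 + H + H^2/2 \<le> exp H" using assms by (intro exp_lower_Taylor_quadratic) simp
      moreover have "8^2 \<le> H^2" using assms by (intro power_mono) auto
      then have "64 \<le> H^2" by simp
      moreover have "exp H \<le> exp (C + H)" using assms by simp
      ultimately show ?thesis using assms by linarith
    qed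
    ultimately show "exp (C - H) + 7 + 10 \<le> exp (C + H)" by linarith
  qed simp_all
  also have "\<dots> \<subseteq> exp ` exp ` real_square C H"
    using assms pi_less_4 by (intro image_mono exp_square_covers_annulus) linarith
  finally show ?thesis .
qed

lemma iterate_image_contains_annulus:
  assumes "open (U::complex set)" "U \<noteq> {}"
  shows "\<exists>N. annulus (exp (-7)) (exp 7) \<subseteq> (exp ^^ N) ` U"
proof -
  obtain a \<delta> where "0 < \<delta>" "ball a \<delta> \<subseteq> U"
    using assms open_contains_ball by blast
  then obtain n z where z: "z \<in> U" "Im ((exp ^^ n) z) = 0"
    using iterate_hits_real_axis by blast
  define p where "p = (exp ^^ n) z"
  have "open ((exp ^^ n) ` U)" "p \<in> (exp ^^ n) ` U"
    using iterate_image_open[OF assms(1)] z(1) by (simp_all add: p_def)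
  then obtain e where e: "0 < e" "ball p e \<subseteq> (exp ^^ n) ` U"
    by (meson open_contains_ball)
  have square: "real_square (Re p) (e/2) \<subseteq> (exp ^^ n) ` U"
    using real_square_subset_ball[of p e] z(2) e(2) by (simp add: p_def)
  obtain j where j: "8 \<le> square_size (Re p) (e/2) j" "0 \<le> (exp ^^ j) (Re p)"
    using square_size_eventually_large e(1) half_gt_zero by blast
  have "annulus (exp (-7)) (exp 7)
      \<subseteq> exp ` exp ` real_square ((exp ^^ j) (Re p)) (square_size (Re p) (e/2) j)"
    using j by (intro large_square_covers_annulus)
  also have "\<dots> \<subseteq> exp ` exp ` (exp ^^ (n + j)) ` U"
    using iterate_covers_squares[OF square] e(1) by (intro image_mono) simp
  also have "\<dots> = (exp ^^ Suc (Suc (n + j))) ` U"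
    by (simp only: iterate_image_Suc)
  finally show ?thesis by blast
qed

lemma annulus_step:
  assumes "7 \<le> X"
  shows "annulus (exp (-(X+1))) (exp (X+1)) \<subseteq> exp ` annulus (exp (-X)) (exp X)"
proof (rule exp_covers_annulus)
  have "1 + X + X^2/2 \<le> exp X" using assms by (intro exp_lower_Taylor_quadratic) simp
  moreover have "7^2 \<le> X^2" using assms by (intro power_mono) auto
  then have "49 \<le> X^2" by simp
  moreover have "exp (-X) \<le> 1" using assms by simp
  ultimately show "exp (-X) + (X + 1) + 10 \<le> exp X" using assms by linarith
qed (use assms in simp_all)

lemma iterate_image_contains_annuli:
  assumes "annulus (exp (-7)) (exp 7) \<subseteq> (exp ^^ N) ` U"
  shows "annulus (exp (-(7 + real k))) (exp (7 + real k)) \<subseteq> (exp ^^ (N + k)) ` (U::complex set)"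
proof (induction k)
  case (Suc k)
  have "annulus (exp (-(7 + real (Suc k)))) (exp (7 + real (Suc k)))
      \<subseteq> exp ` annulus (exp (-(7 + real k))) (exp (7 + real k))"
    using annulus_step[of "7 + real k"] by (simp add: add_ac)
  also have "\<dots> \<subseteq> (exp ^^ (N + Suc k)) ` U"
    using Suc by (simp only: iterate_image_Suc add_Suc_right image_mono)
  finally show ?case .
qed (use assms in simp)

lemma compact_subset_annulus:
  assumes "compact K" "0 \<notin> K"
  shows "\<exists>X. K \<subseteq> annulus (exp (-X)) (exp X)"
proof -
  obtain e where e: "0 < e" "\<And>z. z \<in> K \<Longrightarrow> e \<le> norm z"
    using assms compact_imp_closed separate_point_closed[of K 0] by (auto simp: dist_norm)
  obtain B where B: "\<And>z. z \<in> K \<Longrightarrow> norm z \<le> B"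
    using compact_imp_bounded[OF assms(1)] bounded_iff by blast
  define X where "X = max B (1/e)"
  have "1 + X \<le> exp X" "B \<le> X" "1/e \<le> X" by (simp_all add: X_def exp_ge_add_one_self)
  then have "B < exp X" "1/e < exp X" by linarith+
  then have "exp (-X) < e" using e(1) by (simp add: exp_minus field_simps)
  then have "K \<subseteq> annulus (exp (-X)) (exp X)"
    using e B \<open>B < exp X\<close> by (fastforce simp: annulus_def)
  then show ?thesis ..
qed

theorem mainTheorem12:
  fixes K U :: "complex set"
  assumes "compact K" and "0 \<notin> K"
    and "open U" and "U \<noteq> {}"
  shows "\<exists>N::nat. \<forall>n\<ge>N. K \<subseteq> (exp ^^ n) ` U"
proof -
  obtain N0 where "annulus (exp (-7)) (exp 7) \<subseteq> (exp ^^ N0) ` U"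
    using iterate_image_contains_annulus assms(3,4) by blast
  then have annuli: "annulus (exp (-(7 + real k))) (exp (7 + real k)) \<subseteq> (exp ^^ (N0 + k)) ` U" for k
    by (rule iterate_image_contains_annuli)
  obtain X where X: "K \<subseteq> annulus (exp (-X)) (exp X)"
    using compact_subset_annulus assms(1,2) by blast
  show ?thesis
  proof (intro exI allI impI)
    fix n assume "N0 + nat \<lceil>X\<rceil> \<le> n"
    then have "X \<le> 7 + real (n - N0)" and n: "n = N0 + (n - N0)" by linarith+
    then have "K \<subseteq> annulus (exp (-(7 + real (n - N0)))) (exp (7 + real (n - N0)))"
      using X annulus_mono by blast
    then show "K \<subseteq> (exp ^^ n) ` U" using annuli[of "n - N0"] n by simp
  qed
qed

end
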